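(* Let $d\ge 1$ be an integer and let $G$ be a graph that is closed in the $d$-rigidity matroid. Suppose $A,B$ are disjoint vertex subsets each of which induces a clique in $G$, and suppose $G$ contains a matching of $\binom{d+1}{2}$ edges each having one endpoint in $A$ and the other in $B$. Then $A\cup B$ induces a clique in $G$.
   Context: Fix $n$ and a generic $\mathbf p:[n]\to\mathbb R^d$ (its $dn$ coordinates algebraically independent over $\mathbb Q$). For $x\ne y\in[n]$, let $\mathbf r_{xy}\in\mathbb R^{dn}$ be the vector with $(\mathbf p(x)-\mathbf p(y))^T$ in the $d$ coordinates of $x$, $(\mathbf p(y)-\mathbf p(x))^T$ in the $d$ coordinates of $y$, and $0$ elsewhere. The $d$-rigidity closure of a graph $G$ on $[n]$ is the graph $C_d(G)$ with edge set $\{f\in\binom{[n]}2: \mathbf r_f\in\operatorname{span}_{\mathbb R}(\mathbf r_e: e\in G)\}$ (independent of the generic $\mathbf p$). $G$ is closed in the $d$-rigidity matroid if $C_d(G)=G$. *)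

theory Defs
  imports Complex_Main
begin

text \<open>Vertices are 0..<n. A configuration p assigns to vertex v and coordinate k<d the real p v k.
  Vectors in R^{dn} are functions on index pairs (vertex, coordinate).\<close>

definition coord_box :: "nat \<Rightarrow> nat \<Rightarrow> (nat \<times> nat) set" where
  "coord_box d n = {0..<n} \<times> {0..<d}"

text \<open>Algebraic independence over Q of the dn coordinates: no nonzero rational polynomial
  (finite set of distinct monomials with rational coefficients, not all zero) in the variables
  indexed by the box vanishes at p.\<close>
definition generic :: "nat \<Rightarrow> nat \<Rightarrow> (nat \<Rightarrow> nat \<Rightarrow> real) \<Rightarrow> bool" where
  "generic d n p \<longleftrightarrow>
     (\<forall>(M :: ((nat \<times> nat) \<Rightarrow> nat) set) (c :: ((nat \<times> nat) \<Rightarrow> nat) \<Rightarrow> rat).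
        finite M \<and> (\<forall>m\<in>M. \<forall>i. i \<notin> coord_box d n \<longrightarrow> m i = 0) \<and> (\<exists>m\<in>M. c m \<noteq> 0)
        \<longrightarrow> (\<Sum>m\<in>M. of_rat (c m) * (\<Prod>i\<in>coord_box d n. p (fst i) (snd i) ^ m i)) \<noteq> (0::real))"

definition rvec :: "nat \<Rightarrow> nat \<Rightarrow> (nat \<Rightarrow> nat \<Rightarrow> real) \<Rightarrow> nat \<Rightarrow> nat \<Rightarrow> (nat \<times> nat \<Rightarrow> real)" where
  "rvec d n p x y = (\<lambda>(v, k). if v < n \<and> k < d then
        (if v = x then p x k - p y k else if v = y then p y k - p x k else 0) else 0)"

definition in_real_span :: "('i \<Rightarrow> real) \<Rightarrow> ('i \<Rightarrow> real) set \<Rightarrow> bool" where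
  "in_real_span w S \<longleftrightarrow> (\<exists>T c. finite T \<and> T \<subseteq> S \<and> w = (\<lambda>i. \<Sum>u\<in>T. c u * u i))"

definition is_graph :: "nat \<Rightarrow> nat set set \<Rightarrow> bool" where
  "is_graph n G \<longleftrightarrow> (\<forall>e\<in>G. e \<subseteq> {0..<n} \<and> card e = 2)"

definition rigidity_closure :: "nat \<Rightarrow> nat \<Rightarrow> (nat \<Rightarrow> nat \<Rightarrow> real) \<Rightarrow> nat set set \<Rightarrow> nat set set" where
  "rigidity_closure d n p G =
     {{x, y} | x y. x < n \<and> y < n \<and> x \<noteq> y \<and>
        in_real_span (rvec d n p x y) {rvec d n p u v | u v. u \<noteq> v \<and> {u, v} \<in> G}}"

text \<open>Closed in the d-rigidity matroid (closure is independent of the generic p).\<close>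
definition rigidity_closed :: "nat \<Rightarrow> nat \<Rightarrow> nat set set \<Rightarrow> bool" where
  "rigidity_closed d n G \<longleftrightarrow> (\<exists>p. generic d n p \<and> rigidity_closure d n p G = G)"

definition is_clique :: "nat set set \<Rightarrow> nat set \<Rightarrow> bool" where
  "is_clique G A \<longleftrightarrow> (\<forall>x\<in>A. \<forall>y\<in>A. x \<noteq> y \<longrightarrow> {x, y} \<in> G)"

end

theory Submission
  imports Defs "Jordan_Normal_Form.Determinant"
begin

text \<open>If the edges of \<open>G\<close> inside \<open>V = A \<union> B\<close> are infinitesimally rigid at some configuration
  \<open>q\<close> (every flex orthogonal to the trivial motions vanishes), then the Gram determinant of their
  rigidity vectors together with the trivial motions is a rational polynomial in the configuration
  that does not vanish at \<open>q\<close>, hence not at the generic \<open>p\<close>. So at \<open>p\<close> every rigidity vector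
  \<open>r\<^sub>x\<^sub>y\<close> with \<open>x, y \<in> V\<close> is a combination of edge vectors plus a trivial motion, and the trivial
  part vanishes because \<open>r\<^sub>x\<^sub>y\<close> and the edge vectors are orthogonal to all trivial motions; thus
  \<open>{x, y}\<close> lies in the closure, which is \<open>G\<close>.

  A rigid \<open>q\<close> exists: for \<open>d = 1\<close> place every vertex \<open>v\<close> at the point \<open>v\<close> of the line. For
  \<open>d \<ge> 2\<close> place the ends of the \<open>(d + 1) choose 2\<close> matching edges so that both cliques contain a
  point at the origin and a point on every axis; then a flex is an affine motion with skew linear
  part on \<open>A\<close> and another one on \<open>B\<close>, and the matching edges force the two to coincide.\<close>

section \<open>Rational polynomials in the coordinates of a configuration\<close>

definition monomial_at :: "nat \<Rightarrow> nat \<Rightarrow> (nat \<times> nat \<Rightarrow> nat) \<Rightarrow> (nat \<Rightarrow> nat \<Rightarrow> real) \<Rightarrow> real" where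
  "monomial_at d n m q = (\<Prod>i\<in>coord_box d n. q (fst i) (snd i) ^ m i)"

definition rat_poly_fun :: "nat \<Rightarrow> nat \<Rightarrow> ((nat \<Rightarrow> nat \<Rightarrow> real) \<Rightarrow> real) \<Rightarrow> bool" where
  "rat_poly_fun d n F \<longleftrightarrow> (\<exists>M c. finite M \<and> (\<forall>m\<in>M. \<forall>i. i \<notin> coord_box d n \<longrightarrow> m i = 0)
     \<and> (\<forall>q. F q = (\<Sum>m\<in>M. of_rat (c m) * monomial_at d n m q)))"

lemma finite_coord_box [simp]: "finite (coord_box d n)"
  unfolding coord_box_def by simp

lemma generic_rat_poly_fun_nonzero:
  assumes "rat_poly_fun d n F" "generic d n p" "F q \<noteq> 0"
  shows "F p \<noteq> 0"
proof -
  obtain M c where M: "finite M" "\<forall>m\<in>M. \<forall>i. i \<notin> coord_box d n \<longrightarrow> m i = 0"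
    and F: "\<And>q. F q = (\<Sum>m\<in>M. of_rat (c m) * monomial_at d n m q)"
    using assms(1) unfolding rat_poly_fun_def by blast
  have "\<exists>m\<in>M. c m \<noteq> 0"
  proof (rule ccontr)
    assume "\<not> ?thesis"
    then have "F q = 0" using F[of q] by simp
    then show False using assms(3) by simp
  qed
  then show ?thesis using assms(2) M F unfolding generic_def monomial_at_def by auto
qed

lemma rat_poly_fun_const: "rat_poly_fun d n (\<lambda>q. of_rat a)"
  unfolding rat_poly_fun_def
  by (rule exI[of _ "{\<lambda>_. 0}"], rule exI[of _ "\<lambda>_. a"]) (simp add: monomial_at_def)

lemma rat_poly_fun_of_int: "rat_poly_fun d n (\<lambda>q. of_int z)"
  using rat_poly_fun_const[of d n "of_int z"] by simp

lemma rat_poly_fun_coord: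
  assumes "(v, k) \<in> coord_box d n"
  shows "rat_poly_fun d n (\<lambda>q. q v k)"
  unfolding rat_poly_fun_def
proof (intro exI[of _ "{\<lambda>i. if i = (v, k) then 1 else 0}"] exI[of _ "\<lambda>_. 1"] conjI allI)
  fix q :: "nat \<Rightarrow> nat \<Rightarrow> real"
  have "monomial_at d n (\<lambda>i. if i = (v, k) then 1 else 0) q
      = (\<Prod>i\<in>coord_box d n. if i = (v, k) then q (fst i) (snd i) else 1)"
    unfolding monomial_at_def by (rule prod.cong) auto
  also have "\<dots> = q v k" using assms by (simp add: prod.delta)
  finally show "q v k = (\<Sum>m\<in>{\<lambda>i. if i = (v, k) then 1 else 0}. of_rat 1 * monomial_at d n m q)"
    by simp
qed (use assms in auto)

lemma rat_poly_fun_add: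
  assumes "rat_poly_fun d n F" "rat_poly_fun d n H"
  shows "rat_poly_fun d n (\<lambda>q. F q + H q)"
proof -
  obtain M1 c1 where M1: "finite M1" "\<forall>m\<in>M1. \<forall>i. i \<notin> coord_box d n \<longrightarrow> m i = 0"
    and F: "\<And>q. F q = (\<Sum>m\<in>M1. of_rat (c1 m) * monomial_at d n m q)"
    using assms(1) unfolding rat_poly_fun_def by blast
  obtain M2 c2 where M2: "finite M2" "\<forall>m\<in>M2. \<forall>i. i \<notin> coord_box d n \<longrightarrow> m i = 0"
    and H: "\<And>q. H q = (\<Sum>m\<in>M2. of_rat (c2 m) * monomial_at d n m q)"
    using assms(2) unfolding rat_poly_fun_def by blast
  define c where "c m = (if m \<in> M1 then c1 m else 0) + (if m \<in> M2 then c2 m else 0)" for m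
  have "F q + H q = (\<Sum>m\<in>M1 \<union> M2. of_rat (c m) * monomial_at d n m q)" for q
  proof -
    have "F q = (\<Sum>m\<in>M1 \<union> M2. of_rat (if m \<in> M1 then c1 m else 0) * monomial_at d n m q)"
      unfolding F using M1(1) M2(1) by (intro sum.mono_neutral_cong_left) auto
    moreover have "H q = (\<Sum>m\<in>M1 \<union> M2. of_rat (if m \<in> M2 then c2 m else 0) * monomial_at d n m q)"
      unfolding H using M1(1) M2(1) by (intro sum.mono_neutral_cong_left) auto
    ultimately show ?thesis unfolding c_def of_rat_add distrib_right sum.distrib by (simp only:)
  qed
  then show ?thesis unfolding rat_poly_fun_def using M1 M2
    by (intro exI[of _ "M1 \<union> M2"] exI[of _ c]) auto
qed

lemma monomial_at_add: "monomial_at d n (\<lambda>i. a i + b i) q = monomial_at d n a q * monomial_at d n b q"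
  unfolding monomial_at_def power_add prod.distrib ..

lemma rat_poly_fun_mult:
  assumes "rat_poly_fun d n F" "rat_poly_fun d n H"
  shows "rat_poly_fun d n (\<lambda>q. F q * H q)"
proof -
  obtain M1 c1 where M1: "finite M1" "\<forall>m\<in>M1. \<forall>i. i \<notin> coord_box d n \<longrightarrow> m i = 0"
    and F: "\<And>q. F q = (\<Sum>m\<in>M1. of_rat (c1 m) * monomial_at d n m q)"
    using assms(1) unfolding rat_poly_fun_def by blast
  obtain M2 c2 where M2: "finite M2" "\<forall>m\<in>M2. \<forall>i. i \<notin> coord_box d n \<longrightarrow> m i = 0"
    and H: "\<And>q. H q = (\<Sum>m\<in>M2. of_rat (c2 m) * monomial_at d n m q)"
    using assms(2) unfolding rat_poly_fun_def by blast
  define h where "h = (\<lambda>(a :: nat \<times> nat \<Rightarrow> nat, b :: nat \<times> nat \<Rightarrow> nat) i. a i + b i)"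
  define c where "c m = (\<Sum>x\<in>{x\<in>M1 \<times> M2. h x = m}. c1 (fst x) * c2 (snd x))" for m
  have "F q * H q = (\<Sum>m\<in>h ` (M1 \<times> M2). of_rat (c m) * monomial_at d n m q)" for q
  proof -
    have "F q * H q = (\<Sum>x\<in>M1 \<times> M2. of_rat (c1 (fst x) * c2 (snd x)) * monomial_at d n (h x) q)"
      unfolding F H sum_product sum.cartesian_product h_def
      by (rule sum.cong) (auto simp: monomial_at_add of_rat_mult)
    also have "\<dots> = (\<Sum>m\<in>h ` (M1 \<times> M2). \<Sum>x\<in>{x\<in>M1 \<times> M2. h x = m}.
        of_rat (c1 (fst x) * c2 (snd x)) * monomial_at d n (h x) q)"
      using M1(1) M2(1) by (rule sum.image_gen[OF finite_cartesian_product])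
    also have "\<dots> = (\<Sum>m\<in>h ` (M1 \<times> M2). of_rat (c m) * monomial_at d n m q)"
      unfolding c_def of_rat_sum sum_distrib_right by (intro sum.cong refl) auto
    finally show ?thesis .
  qed
  moreover have "\<forall>m\<in>h ` (M1 \<times> M2). \<forall>i. i \<notin> coord_box d n \<longrightarrow> m i = 0"
    using M1(2) M2(2) unfolding h_def by auto
  moreover have "finite (h ` (M1 \<times> M2))" using M1(1) M2(1) by simp
  ultimately show ?thesis unfolding rat_poly_fun_def by blast
qed

lemma rat_poly_fun_diff:
  assumes "rat_poly_fun d n F" "rat_poly_fun d n H"
  shows "rat_poly_fun d n (\<lambda>q. F q - H q)"
  using rat_poly_fun_add[OF assms(1) rat_poly_fun_mult[OF rat_poly_fun_of_int[of d n "-1"] assms(2)]]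
  by simp

lemma rat_poly_fun_sum:
  assumes "finite J" "\<And>j. j \<in> J \<Longrightarrow> rat_poly_fun d n (F j)"
  shows "rat_poly_fun d n (\<lambda>q. \<Sum>j\<in>J. F j q)"
  using assms
proof (induction J rule: finite_induct)
  case empty
  then show ?case using rat_poly_fun_of_int[of d n 0] by simp
next
  case (insert x J)
  then show ?case using rat_poly_fun_add[of d n "F x"] by simp
qed

lemma rat_poly_fun_prod:
  assumes "finite J" "\<And>j. j \<in> J \<Longrightarrow> rat_poly_fun d n (F j)"
  shows "rat_poly_fun d n (\<lambda>q. \<Prod>j\<in>J. F j q)"
  using assms
proof (induction J rule: finite_induct)
  case empty
  then show ?case using rat_poly_fun_of_int[of d n 1] by simp
next
  case (insert x J)
  then show ?case using rat_poly_fun_mult[of d n "F x"] by simp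
qed

lemma rat_poly_fun_det:
  assumes "\<And>a b. a < m \<Longrightarrow> b < m \<Longrightarrow> rat_poly_fun d n (\<lambda>q. f q a b)"
  shows "rat_poly_fun d n (\<lambda>q. det (mat m m (\<lambda>(a, b). f q a b)))"
proof -
  have perm_range: "\<pi> a < m" if "\<pi> \<in> {\<pi>. \<pi> permutes {0..<m}}" "a < m" for \<pi> a
    using that by (auto dest: permutes_in_image)
  have "det (mat m m (\<lambda>(a, b). f q a b)) =
     (\<Sum>\<pi>\<in>{\<pi>. \<pi> permutes {0..<m}}. of_int (sign \<pi>) * (\<Prod>a\<in>{0..<m}. f q a (\<pi> a)))" for q
    unfolding det_def'[OF mat_carrier]
  proof (intro sum.cong refl arg_cong2[where f=times] prod.cong)
    fix \<pi> a assume "\<pi> \<in> {\<pi>. \<pi> permutes {0..<m}}" "a \<in> {0..<m}"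
    then show "mat m m (\<lambda>(a, b). f q a b) $$ (a, \<pi> a) = f q a (\<pi> a)"
      using perm_range by simp
  qed
  moreover have "rat_poly_fun d n (\<lambda>q. \<Sum>\<pi>\<in>{\<pi>. \<pi> permutes {0..<m}}.
      of_int (sign \<pi>) * (\<Prod>a\<in>{0..<m}. f q a (\<pi> a)))"
  proof (rule rat_poly_fun_sum)
    show "finite {\<pi>. \<pi> permutes {0..<m}}" by (rule finite_permutations) simp
  qed (intro rat_poly_fun_mult rat_poly_fun_of_int rat_poly_fun_prod assms; simp add: perm_range)
  ultimately show ?thesis by simp
qed

section \<open>Gram matrices\<close>

definition inner_on :: "'i set \<Rightarrow> ('i \<Rightarrow> real) \<Rightarrow> ('i \<Rightarrow> real) \<Rightarrow> real" where
  "inner_on I f g = (\<Sum>i\<in>I. f i * g i)"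

lemma inner_on_self_eq_0:
  assumes "finite I" "inner_on I f f = 0" "i \<in> I"
  shows "f i = 0"
  using assms sum_nonneg_eq_0_iff[of I "\<lambda>i. f i * f i"] unfolding inner_on_def by simp

lemma inner_on_lincomb_left:
  "inner_on I (\<lambda>i. \<Sum>j\<in>J. c j * f j i) g = (\<Sum>j\<in>J. c j * inner_on I (f j) g)"
  unfolding inner_on_def sum_distrib_left sum_distrib_right by (subst sum.swap) (simp add: mult_ac)

lemma inner_on_diff_lincomb_right:
  "inner_on I g (\<lambda>i. u i - (\<Sum>j\<in>J. c j * f j i)) = inner_on I g u - (\<Sum>j\<in>J. c j * inner_on I g (f j))"
  unfolding inner_on_def sum_distrib_left right_diff_distrib sum_subtractf
  by (subst sum.swap) (simp add: mult_ac)

lemma inner_on_orthogonal_part_eq_0: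
  assumes "finite I"
    and w: "\<And>i. i \<in> I \<Longrightarrow> w i = (\<Sum>e\<in>E. \<alpha> e * f e i) + (\<Sum>j\<in>J. \<beta> j * g j i)"
    and g_w: "\<And>j. j \<in> J \<Longrightarrow> inner_on I (g j) w = 0"
    and g_f: "\<And>j e. j \<in> J \<Longrightarrow> e \<in> E \<Longrightarrow> inner_on I (g j) (f e) = 0"
    and "i \<in> I"
  shows "(\<Sum>j\<in>J. \<beta> j * g j i) = 0"
proof -
  define \<tau> where "\<tau> = (\<lambda>i. \<Sum>j\<in>J. \<beta> j * g j i)"
  have "inner_on I \<tau> \<tau> = inner_on I \<tau> (\<lambda>i. w i - (\<Sum>e\<in>E. \<alpha> e * f e i))"
    unfolding inner_on_def using w by (intro sum.cong refl) (simp add: \<tau>_def)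
  also have "\<dots> = 0"
    unfolding inner_on_diff_lincomb_right \<tau>_def inner_on_lincomb_left using g_w g_f by simp
  finally have "\<tau> i = 0" using inner_on_self_eq_0[OF assms(1) _ assms(5)] by blast
  then show ?thesis unfolding \<tau>_def .
qed

lemma inner_on_reindex:
  assumes "bij_betw h {0..<m} I"
  shows "inner_on I f g = (\<Sum>a\<in>{0..<m}. f (h a) * g (h a))"
  unfolding inner_on_def using assms by (rule sum.reindex_bij_betw[symmetric])

definition gram_mat :: "nat \<Rightarrow> (nat \<Rightarrow> 'i) \<Rightarrow> 'r set \<Rightarrow> ('r \<Rightarrow> 'i \<Rightarrow> real) \<Rightarrow> real mat" where
  "gram_mat m h R f = mat m m (\<lambda>(a, b). \<Sum>\<rho>\<in>R. f \<rho> (h a) * f \<rho> (h b))"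

lemma gram_mat_carrier [simp]: "gram_mat m h R f \<in> carrier_mat m m"
  unfolding gram_mat_def by simp

lemma gram_mat_mult_vec:
  assumes "a < m" "v \<in> carrier_vec m"
  shows "(gram_mat m h R f *\<^sub>v v) $ a =
    (\<Sum>\<rho>\<in>R. f \<rho> (h a) * (\<Sum>b\<in>{0..<m}. v $ b * f \<rho> (h b)))"
proof -
  have "(gram_mat m h R f *\<^sub>v v) $ a = (\<Sum>b\<in>{0..<m}. (\<Sum>\<rho>\<in>R. f \<rho> (h a) * f \<rho> (h b)) * v $ b)"
    using assms unfolding gram_mat_def by (simp add: scalar_prod_def)
  also have "\<dots> = (\<Sum>\<rho>\<in>R. f \<rho> (h a) * (\<Sum>b\<in>{0..<m}. v $ b * f \<rho> (h b)))"
    unfolding sum_distrib_left sum_distrib_right by (subst sum.swap) (simp add: mult_ac)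
  finally show ?thesis .
qed

lemma gram_mat_quadratic_form:
  assumes "v \<in> carrier_vec m"
  shows "(\<Sum>a\<in>{0..<m}. v $ a * (gram_mat m h R f *\<^sub>v v) $ a) =
    (\<Sum>\<rho>\<in>R. (\<Sum>a\<in>{0..<m}. v $ a * f \<rho> (h a))\<^sup>2)"
  using assms
  by (simp add: gram_mat_mult_vec sum_distrib_left sum_distrib_right power2_eq_square mult_ac
      sum.swap[of _ R])

lemma gram_mat_det_nonzero:
  assumes h: "bij_betw h {0..<m} I" and "finite R"
    and orth: "\<And>r. \<forall>\<rho>\<in>R. inner_on I r (f \<rho>) = 0 \<Longrightarrow> \<forall>i\<in>I. r i = 0"
  shows "det (gram_mat m h R f) \<noteq> 0"
proof
  assume "det (gram_mat m h R f) = 0"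
  then obtain v where v: "v \<in> carrier_vec m" "v \<noteq> 0\<^sub>v m" "gram_mat m h R f *\<^sub>v v = 0\<^sub>v m"
    using det_0_iff_vec_prod_zero_field[OF gram_mat_carrier] by blast
  define r where "r i = (if i \<in> I then v $ inv_into {0..<m} h i else 0)" for i
  have r_h: "r (h a) = v $ a" if "a < m" for a
    using h that unfolding r_def bij_betw_def by auto
  have "(\<Sum>\<rho>\<in>R. (inner_on I r (f \<rho>))\<^sup>2) = (\<Sum>a\<in>{0..<m}. v $ a * (gram_mat m h R f *\<^sub>v v) $ a)"
    unfolding gram_mat_quadratic_form[OF v(1)] inner_on_reindex[OF h] by (simp add: r_h)
  also have "\<dots> = 0" using v(3) by simp
  finally have "\<forall>\<rho>\<in>R. inner_on I r (f \<rho>) = 0"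
    using \<open>finite R\<close> by (simp add: sum_nonneg_eq_0_iff)
  then have "\<forall>i\<in>I. r i = 0" by (rule orth)
  then have "v = 0\<^sub>v m"
    using v(1) r_h h by (intro eq_vecI) (auto simp: bij_betw_def)
  with v(2) show False ..
qed

lemma spanned_if_gram_mat_det_nonzero:
  assumes h: "bij_betw h {0..<m} I" and det: "det (gram_mat m h R f) \<noteq> 0"
  shows "\<exists>\<alpha>. \<forall>i\<in>I. w i = (\<Sum>\<rho>\<in>R. \<alpha> \<rho> * f \<rho> i)"
proof -
  obtain B where B: "B \<in> carrier_mat m m" "gram_mat m h R f * B = 1\<^sub>m m"
    using det_non_zero_imp_unit[OF gram_mat_carrier det]
    unfolding Units_def ring_mat_def by auto
  define z where "z = B *\<^sub>v vec m (\<lambda>a. w (h a))"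
  have z: "z \<in> carrier_vec m" unfolding z_def using B(1) by simp
  have "gram_mat m h R f *\<^sub>v z = (gram_mat m h R f * B) *\<^sub>v vec m (\<lambda>a. w (h a))"
    unfolding z_def by (rule assoc_mult_mat_vec[symmetric, OF gram_mat_carrier B(1)]) simp
  then have solve: "gram_mat m h R f *\<^sub>v z = vec m (\<lambda>a. w (h a))"
    using B(2) by simp
  define \<alpha> where "\<alpha> \<rho> = (\<Sum>b\<in>{0..<m}. z $ b * f \<rho> (h b))" for \<rho>
  have "w i = (\<Sum>\<rho>\<in>R. \<alpha> \<rho> * f \<rho> i)" if "i \<in> I" for i
  proof -
    obtain a where a: "a < m" "i = h a" using h \<open>i \<in> I\<close> by (force simp: bij_betw_def)
    have "w i = (gram_mat m h R f *\<^sub>v z) $ a" unfolding solve using a by simp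
    also have "\<dots> = (\<Sum>\<rho>\<in>R. \<alpha> \<rho> * f \<rho> i)"
      unfolding gram_mat_mult_vec[OF a(1) z] \<alpha>_def a(2) by (simp add: mult.commute)
    finally show ?thesis .
  qed
  then show ?thesis by blast
qed

section \<open>Rigidity vectors and trivial motions\<close>

definition flex_edge :: "nat \<Rightarrow> (nat \<Rightarrow> nat \<Rightarrow> real) \<Rightarrow> (nat \<times> nat \<Rightarrow> real) \<Rightarrow> nat \<Rightarrow> nat \<Rightarrow> bool" where
  "flex_edge d q r x y \<longleftrightarrow> (\<Sum>k<d. (q x k - q y k) * (r (x, k) - r (y, k))) = 0"

text \<open>For \<open>k < d\<close>, the index \<open>(k, l)\<close> with \<open>l < d\<close> is the infinitesimal rotation of the
  \<open>k\<close>,\<open>l\<close>-plane and \<open>(k, d)\<close> is the translation along the \<open>k\<close>-th axis.\<close>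

definition trivial_motion :: "nat \<Rightarrow> nat set \<Rightarrow> (nat \<Rightarrow> nat \<Rightarrow> real) \<Rightarrow> nat \<times> nat \<Rightarrow> nat \<times> nat \<Rightarrow> real" where
  "trivial_motion d V q j i = (case j of (k, l) \<Rightarrow> case i of (v, k') \<Rightarrow>
     if v \<in> V \<and> k' < d then
       (if l < d then (if k' = k then q v l else 0) - (if k' = l then q v k else 0)
        else (if k' = k then 1 else 0))
     else 0)"

definition motion_index :: "nat \<Rightarrow> (nat \<times> nat) set" where
  "motion_index d = {0..<d} \<times> {0..<Suc d}"

lemma finite_motion_index [simp]: "finite (motion_index d)"
  unfolding motion_index_def by simp

lemma inner_on_box: "inner_on (V \<times> {0..<d::nat}) r g = (\<Sum>v\<in>V. \<Sum>k<d. r (v, k) * g (v, k))"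
  unfolding inner_on_def by (simp add: sum.cartesian_product atLeast0LessThan)

lemma inner_on_rvec:
  assumes "finite V" "V \<subseteq> {0..<n}" "x \<in> V" "y \<in> V" "x \<noteq> y"
  shows "inner_on (V \<times> {0..<d}) r (rvec d n q x y) = (\<Sum>k<d. (q x k - q y k) * (r (x, k) - r (y, k)))"
proof -
  have "rvec d n q x y (v, k) = 0" if "v \<noteq> x" "v \<noteq> y" for v k
    using that by (simp add: rvec_def)
  then have "inner_on (V \<times> {0..<d}) r (rvec d n q x y) =
      (\<Sum>v\<in>{x, y}. \<Sum>k<d. r (v, k) * rvec d n q x y (v, k))"
    unfolding inner_on_box using assms by (intro sum.mono_neutral_right) auto
  also have "\<dots> = (\<Sum>k<d. (q x k - q y k) * (r (x, k) - r (y, k)))"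
    using assms by (simp add: sum.distrib[symmetric] rvec_def algebra_simps subset_iff)
  finally show ?thesis .
qed

lemma flex_edge_iff_orthogonal_rvec:
  assumes "finite V" "V \<subseteq> {0..<n}" "x \<in> V" "y \<in> V" "x \<noteq> y"
  shows "flex_edge d q r x y \<longleftrightarrow> inner_on (V \<times> {0..<d}) r (rvec d n q x y) = 0"
  unfolding flex_edge_def inner_on_rvec[OF assms] ..

lemma inner_on_rotation:
  assumes "k < d" "l < d"
  shows "inner_on (V \<times> {0..<d}) r (trivial_motion d V q (k, l)) =
     (\<Sum>v\<in>V. r (v, k) * q v l) - (\<Sum>v\<in>V. r (v, l) * q v k)"
proof -
  have "inner_on (V \<times> {0..<d}) r (trivial_motion d V q (k, l)) =
     (\<Sum>v\<in>V. (\<Sum>k'<d. r (v, k') * (if k' = k then q v l else 0))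
        - (\<Sum>k'<d. r (v, k') * (if k' = l then q v k else 0)))"
    unfolding inner_on_box sum_subtractf[symmetric]
    by (intro sum.cong refl) (auto simp: trivial_motion_def assms right_diff_distrib)
  also have "\<dots> = (\<Sum>v\<in>V. r (v, k) * q v l - r (v, l) * q v k)"
    using assms by (intro sum.cong refl) (simp add: if_distrib[of "\<lambda>x. _ * x"] sum.delta cong: if_cong)
  finally show ?thesis by (simp add: sum_subtractf)
qed

lemma inner_on_translation:
  assumes "k < d"
  shows "inner_on (V \<times> {0..<d}) r (trivial_motion d V q (k, d)) = (\<Sum>v\<in>V. r (v, k))"
proof -
  have "inner_on (V \<times> {0..<d}) r (trivial_motion d V q (k, d)) =
      (\<Sum>v\<in>V. \<Sum>k'<d. if k' = k then r (v, k') else 0)"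
    unfolding inner_on_box by (intro sum.cong refl) (auto simp: trivial_motion_def)
  also have "\<dots> = (\<Sum>v\<in>V. r (v, k))" using assms by simp
  finally show ?thesis .
qed

lemma trivial_motion_orthogonal_rvec:
  assumes "finite V" "V \<subseteq> {0..<n}" "x \<in> V" "y \<in> V" "x \<noteq> y" "j \<in> motion_index d"
  shows "inner_on (V \<times> {0..<d}) (trivial_motion d V q j) (rvec d n q x y) = 0"
proof -
  obtain k l where j: "j = (k, l)" "k < d" "l \<le> d" using assms(6) unfolding motion_index_def by auto
  have "inner_on (V \<times> {0..<d}) (trivial_motion d V q j) (rvec d n q x y) =
     (\<Sum>k'<d. (q x k' - q y k') * (trivial_motion d V q j (x, k') - trivial_motion d V q j (y, k')))"
    using inner_on_rvec[OF assms(1-5)] .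
  also have "\<dots> = 0"
  proof (cases "l < d")
    case True
    have "(\<Sum>k'<d. (q x k' - q y k') * (trivial_motion d V q j (x, k') - trivial_motion d V q j (y, k')))
       = (\<Sum>k'<d. (if k' = k then (q x k' - q y k') * (q x l - q y l) else 0)
              - (if k' = l then (q x k' - q y k') * (q x k - q y k) else 0))"
      using assms True j by (intro sum.cong refl) (auto simp: trivial_motion_def algebra_simps)
    also have "\<dots> = 0" using True j by (simp add: sum_subtractf)
    finally show ?thesis .
  next
    case False
    then show ?thesis using assms j by (simp add: trivial_motion_def)
  qed
  finally show ?thesis .
qed

lemma rvec_eq_0_outside:
  assumes "x \<in> V" "y \<in> V" "i \<notin> V \<times> {0..<d}"
  shows "rvec d n q x y i = 0"
  using assms unfolding rvec_def by (cases i) auto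

lemma rat_poly_fun_rvec:
  assumes "x < n" "y < n" "k < d"
  shows "rat_poly_fun d n (\<lambda>q. rvec d n q x y (v, k))"
proof -
  have "(x, k) \<in> coord_box d n" "(y, k) \<in> coord_box d n"
    using assms unfolding coord_box_def by auto
  then show ?thesis
    using rat_poly_fun_diff rat_poly_fun_coord rat_poly_fun_of_int[of d n 0]
    unfolding rvec_def by (cases "v < n"; cases "v = x"; cases "v = y") (auto simp: assms)
qed

lemma rat_poly_fun_trivial_motion:
  assumes "v < n" "k' < d" "j \<in> motion_index d"
  shows "rat_poly_fun d n (\<lambda>q. trivial_motion d V q j (v, k'))"
proof -
  obtain k l where j: "j = (k, l)" "k < d" "l \<le> d" using assms(3) unfolding motion_index_def by auto
  have coords: "(v, k) \<in> coord_box d n" "l < d \<Longrightarrow> (v, l) \<in> coord_box d n"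
    using assms j unfolding coord_box_def by auto
  show ?thesis
    using rat_poly_fun_diff rat_poly_fun_coord[OF coords(1)] rat_poly_fun_coord[OF coords(2)]
      rat_poly_fun_of_int[of d n 0] rat_poly_fun_of_int[of d n 1]
      rat_poly_fun_diff[OF rat_poly_fun_of_int[of d n 0] rat_poly_fun_coord[OF coords(1)]]
    unfolding trivial_motion_def j
    by (cases "v \<in> V"; cases "l < d"; cases "k' = k"; cases "k' = l") (auto simp: assms j)
qed

section \<open>Infinitesimal rigidity and the generic closure\<close>

definition edges_within :: "nat set \<Rightarrow> nat set set \<Rightarrow> (nat \<times> nat) set" where
  "edges_within V G = {(x, y). x \<in> V \<and> y \<in> V \<and> x \<noteq> y \<and> {x, y} \<in> G}"

text \<open>Rigidity is expressed through flexes orthogonal to the trivial motions, which spares us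
  from showing that the trivial motions span all trivial flexes.\<close>

definition infinitesimally_rigid :: "nat \<Rightarrow> nat set \<Rightarrow> nat set set \<Rightarrow> (nat \<Rightarrow> nat \<Rightarrow> real) \<Rightarrow> bool" where
  "infinitesimally_rigid d V G q \<longleftrightarrow> (\<forall>r.
     (\<forall>(x, y)\<in>edges_within V G. flex_edge d q r x y) \<longrightarrow>
     (\<forall>j\<in>motion_index d. inner_on (V \<times> {0..<d}) r (trivial_motion d V q j) = 0) \<longrightarrow>
     (\<forall>i\<in>V \<times> {0..<d}. r i = 0))"

lemma finite_edges_within: "finite V \<Longrightarrow> finite (edges_within V G)"
  unfolding edges_within_def by (rule finite_subset[of _ "V \<times> V"]) auto

lemma edges_within_iff: "(x, y) \<in> edges_within V G \<longleftrightarrow> x \<in> V \<and> y \<in> V \<and> x \<noteq> y \<and> {x, y} \<in> G"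
  unfolding edges_within_def by simp

definition rigidity_row_index :: "nat \<Rightarrow> nat set \<Rightarrow> nat set set \<Rightarrow> (nat \<times> nat + nat \<times> nat) set" where
  "rigidity_row_index d V G = Inl ` edges_within V G \<union> Inr ` motion_index d"

definition rigidity_rows ::
    "nat \<Rightarrow> nat \<Rightarrow> nat set \<Rightarrow> (nat \<Rightarrow> nat \<Rightarrow> real) \<Rightarrow> nat \<times> nat + nat \<times> nat \<Rightarrow> nat \<times> nat \<Rightarrow> real" where
  "rigidity_rows d n V q = case_sum (case_prod (rvec d n q)) (trivial_motion d V q)"

lemma finite_rigidity_row_index: "finite V \<Longrightarrow> finite (rigidity_row_index d V G)"
  unfolding rigidity_row_index_def by (simp add: finite_edges_within)

lemma sum_rigidity_row_index:
  assumes "finite V"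
  shows "(\<Sum>\<rho>\<in>rigidity_row_index d V G. \<gamma> \<rho> * rigidity_rows d n V q \<rho> i) =
    (\<Sum>e\<in>edges_within V G. \<gamma> (Inl e) * case_prod (rvec d n q) e i)
      + (\<Sum>j\<in>motion_index d. \<gamma> (Inr j) * trivial_motion d V q j i)"
  using finite_rigidity_row_index[OF assms] unfolding rigidity_row_index_def
  by (subst sum.union_disjoint) (auto simp: sum.reindex rigidity_rows_def)

lemma infinitesimally_rigid_rows:
  assumes V: "finite V" "V \<subseteq> {0..<n}" and rigid: "infinitesimally_rigid d V G q"
    and orth: "\<forall>\<rho>\<in>rigidity_row_index d V G. inner_on (V \<times> {0..<d}) r (rigidity_rows d n V q \<rho>) = 0"
  shows "\<forall>i\<in>V \<times> {0..<d}. r i = 0"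
proof -
  have "flex_edge d q r x y" if "(x, y) \<in> edges_within V G" for x y
  proof -
    have "inner_on (V \<times> {0..<d}) r (rvec d n q x y) = 0"
      using orth[rule_format, of "Inl (x, y)"] that by (simp add: rigidity_row_index_def rigidity_rows_def)
    then show ?thesis using flex_edge_iff_orthogonal_rvec[OF V] that by (simp add: edges_within_iff)
  qed
  moreover have "inner_on (V \<times> {0..<d}) r (trivial_motion d V q j) = 0" if "j \<in> motion_index d" for j
    using orth[rule_format, of "Inr j"] that by (simp add: rigidity_row_index_def rigidity_rows_def)
  ultimately show ?thesis using rigid unfolding infinitesimally_rigid_def by blast
qed

lemma rat_poly_fun_rigidity_rows:
  assumes V: "V \<subseteq> {0..<n}" and \<rho>: "\<rho> \<in> rigidity_row_index d V G" and i: "i \<in> V \<times> {0..<d}"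
  shows "rat_poly_fun d n (\<lambda>q. rigidity_rows d n V q \<rho> i)"
proof -
  obtain v k where vk: "i = (v, k)" "v < n" "k < d" using i V by auto
  show ?thesis
  proof (cases \<rho>)
    case (Inl e)
    then obtain x y where xy: "\<rho> = Inl (x, y)" "x \<in> V" "y \<in> V"
      using \<rho> unfolding rigidity_row_index_def edges_within_def by auto
    then have "x < n" "y < n" using V by auto
    then show ?thesis using xy vk by (simp add: rigidity_rows_def rat_poly_fun_rvec)
  next
    case (Inr j)
    then have "j \<in> motion_index d" using \<rho> unfolding rigidity_row_index_def by auto
    then show ?thesis using vk Inr by (simp add: rigidity_rows_def rat_poly_fun_trivial_motion)
  qed
qed

lemma in_real_span_lincomb:
  assumes "finite J" "\<And>j. j \<in> J \<Longrightarrow> f j \<in> S"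
  shows "in_real_span (\<lambda>i. \<Sum>j\<in>J. c j * f j i) S"
proof -
  have "(\<Sum>j\<in>J. c j * f j i) = (\<Sum>u\<in>f ` J. sum c {j\<in>J. f j = u} * u i)" for i
    unfolding sum.image_gen[OF assms(1), of "\<lambda>j. c j * f j i" f] sum_distrib_right
    by (intro sum.cong) auto
  then show ?thesis
    unfolding in_real_span_def using assms
    by (intro exI[of _ "f ` J"] exI[of _ "\<lambda>u. sum c {j\<in>J. f j = u}"]) auto
qed

text \<open>The Gram determinant of the rigidity rows is a rational polynomial in the configuration,
  so its non-vanishing at \<open>q\<close> transfers to a generic \<open>p\<close>.\<close>

lemma generic_rigid_rows_span:
  assumes gen: "generic d n p" and V: "finite V" "V \<subseteq> {0..<n}"
    and rigid: "infinitesimally_rigid d V G q"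
  shows "\<exists>\<alpha> \<beta>. \<forall>i\<in>V \<times> {0..<d}. w i =
    (\<Sum>e\<in>edges_within V G. \<alpha> e * case_prod (rvec d n p) e i)
      + (\<Sum>j\<in>motion_index d. \<beta> j * trivial_motion d V p j i)"
proof -
  define I where "I = V \<times> {0..<d}"
  define R where "R = rigidity_row_index d V G"
  have "finite R" unfolding R_def using V(1) by (rule finite_rigidity_row_index)
  obtain h where h: "bij_betw h {0..<card I} I"
    using ex_bij_betw_nat_finite[of I] V(1) unfolding I_def by auto
  have det_q: "det (gram_mat (card I) h R (rigidity_rows d n V q)) \<noteq> 0"
    using gram_mat_det_nonzero[OF h \<open>finite R\<close>] infinitesimally_rigid_rows[OF V rigid]
    unfolding I_def R_def by blast
  have poly: "rat_poly_fun d n (\<lambda>q. det (gram_mat (card I) h R (rigidity_rows d n V q)))"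
    unfolding gram_mat_def using bij_betw_apply[OF h] V(2)
    by (intro rat_poly_fun_det rat_poly_fun_sum[OF \<open>finite R\<close>] rat_poly_fun_mult)
      (auto simp: R_def I_def intro!: rat_poly_fun_rigidity_rows)
  have "det (gram_mat (card I) h R (rigidity_rows d n V p)) \<noteq> 0"
    using generic_rat_poly_fun_nonzero[OF poly gen det_q] by simp
  then obtain \<gamma> where "\<forall>i\<in>I. w i = (\<Sum>\<rho>\<in>R. \<gamma> \<rho> * rigidity_rows d n V p \<rho> i)"
    using spanned_if_gram_mat_det_nonzero[OF h] by blast
  then show ?thesis unfolding I_def R_def sum_rigidity_row_index[OF V(1)]
    by (intro exI[of _ "\<lambda>e. \<gamma> (Inl e)"] exI[of _ "\<lambda>j. \<gamma> (Inr j)"]) simp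
qed

lemma generic_rigid_in_closure:
  assumes gen: "generic d n p" and V: "finite V" "V \<subseteq> {0..<n}"
    and rigid: "infinitesimally_rigid d V G q" and xy: "x \<in> V" "y \<in> V" "x \<noteq> y"
  shows "{x, y} \<in> rigidity_closure d n p G"
proof -
  define E where "E = edges_within V G"
  obtain \<alpha> \<beta> where span: "\<forall>i\<in>V \<times> {0..<d}. rvec d n p x y i =
      (\<Sum>e\<in>E. \<alpha> e * case_prod (rvec d n p) e i) + (\<Sum>j\<in>motion_index d. \<beta> j * trivial_motion d V p j i)"
    using generic_rigid_rows_span[OF gen V rigid] unfolding E_def by blast
  have trivial_part: "(\<Sum>j\<in>motion_index d. \<beta> j * trivial_motion d V p j i) = 0" if "i \<in> V \<times> {0..<d}" for i
  proof (rule inner_on_orthogonal_part_eq_0[OF _ span[rule_format] _ _ that])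
    show "finite (V \<times> {0..<d})" using V(1) by simp
  qed (use trivial_motion_orthogonal_rvec[OF V] xy in \<open>auto simp: E_def edges_within_def\<close>)
  have "rvec d n p x y = (\<lambda>i. \<Sum>e\<in>E. \<alpha> e * case_prod (rvec d n p) e i)"
  proof
    fix i
    show "rvec d n p x y i = (\<Sum>e\<in>E. \<alpha> e * case_prod (rvec d n p) e i)"
    proof (cases "i \<in> V \<times> {0..<d}")
      case True
      then show ?thesis using span[rule_format, OF True] trivial_part[OF True] by simp
    next
      case False
      then show ?thesis
        using xy by (auto simp: E_def edges_within_def rvec_eq_0_outside intro!: sum.neutral)
    qed
  qed
  moreover have "in_real_span (\<lambda>i. \<Sum>e\<in>E. \<alpha> e * case_prod (rvec d n p) e i)
      {rvec d n p u v |u v. u \<noteq> v \<and> {u, v} \<in> G}"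
    unfolding E_def using finite_edges_within[OF V(1)]
    by (rule in_real_span_lincomb) (auto simp: edges_within_def)
  ultimately have "in_real_span (rvec d n p x y) {rvec d n p u v |u v. u \<noteq> v \<and> {u, v} \<in> G}"
    by simp
  moreover have "x < n" "y < n" using V(2) xy by auto
  ultimately show ?thesis unfolding rigidity_closure_def using xy(3) by blast
qed

section \<open>Flexes of cliques\<close>

definition skew :: "nat \<Rightarrow> (nat \<Rightarrow> nat \<Rightarrow> real) \<Rightarrow> bool" where
  "skew d S \<longleftrightarrow> (\<forall>k<d. \<forall>l<d. S k l = - S l k)"

definition affine_motion ::
    "nat \<Rightarrow> (nat \<Rightarrow> nat \<Rightarrow> real) \<Rightarrow> (nat \<Rightarrow> real) \<Rightarrow> (nat \<Rightarrow> nat \<Rightarrow> real) \<Rightarrow> nat \<times> nat \<Rightarrow> real" where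
  "affine_motion d S t q = (\<lambda>(c, k). (\<Sum>l<d. S k l * q c l) + t k)"

lemma skew_sum_symmetric:
  assumes "skew d S" "\<And>k l. k < d \<Longrightarrow> l < d \<Longrightarrow> X k l = X l k"
  shows "(\<Sum>k<d. \<Sum>l<d. S k l * X k l) = 0"
proof -
  have "(\<Sum>k<d. \<Sum>l<d. S k l * X k l) = (\<Sum>l<d. \<Sum>k<d. S k l * X k l)"
    by (rule sum.swap)
  also have "\<dots> = (\<Sum>l<d. \<Sum>k<d. - (S l k * X l k))"
  proof (intro sum.cong refl)
    fix l k assume "l \<in> {..<d}" "k \<in> {..<d}"
    then have "S k l = - S l k" "X k l = X l k" using assms unfolding skew_def by blast+
    then show "S k l * X k l = - (S l k * X l k)" by simp
  qed
  finally show ?thesis by (simp add: sum_negf)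
qed

lemma skew_quadratic_form:
  assumes "skew d S"
  shows "(\<Sum>k<d. x k * (\<Sum>l<d. S k l * x l)) = 0"
  using skew_sum_symmetric[OF assms, of "\<lambda>k l. x k * x l"]
  by (simp add: sum_distrib_left mult_ac)

lemma skew_diff:
  assumes "skew d S" "skew d S'"
  shows "skew d (\<lambda>k l. S k l - S' k l)"
  unfolding skew_def
proof (intro allI impI)
  fix k l assume "k < d" "l < d"
  then have "S k l = - S l k" "S' k l = - S' l k" using assms unfolding skew_def by blast+
  then show "S k l - S' k l = - (S l k - S' l k)" by simp
qed

lemma flex_edge_affine_motion:
  assumes "skew d S"
  shows "flex_edge d q (affine_motion d S t q) x y"
proof -
  have "affine_motion d S t q (x, k) - affine_motion d S t q (y, k) = (\<Sum>l<d. S k l * (q x l - q y l))" for k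
    by (simp add: affine_motion_def right_diff_distrib sum_subtractf)
  then show ?thesis
    unfolding flex_edge_def using skew_quadratic_form[OF assms, of "\<lambda>l. q x l - q y l"] by simp
qed

lemma flex_edge_diff:
  assumes "flex_edge d q r x y" "flex_edge d q r' x y"
  shows "flex_edge d q (\<lambda>i. r i - r' i) x y"
  using assms unfolding flex_edge_def
  by (simp add: algebra_simps sum_subtractf sum.distrib)

definition axis_frame :: "nat \<Rightarrow> (nat \<Rightarrow> nat \<Rightarrow> real) \<Rightarrow> nat \<Rightarrow> (nat \<Rightarrow> nat) \<Rightarrow> (nat \<Rightarrow> real) \<Rightarrow> bool" where
  "axis_frame d q z F s \<longleftrightarrow> (\<forall>k<d. q z k = 0) \<and>
     (\<forall>i<d. s i \<noteq> 0 \<and> (\<forall>k<d. q (F i) k = (if k = i then s i else 0)))"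

lemma sum_lessThan_if_eq:
  "k < (d :: nat) \<Longrightarrow> (\<Sum>l<d. (if l = k then a else 0) * g l) = (a * g k :: real)"
  by (simp add: if_distrib[of "\<lambda>x. x * _"] cong: if_cong)

lemma axis_frame_flex_skew:
  assumes flex: "\<And>x y. x \<in> X \<Longrightarrow> y \<in> X \<Longrightarrow> x \<noteq> y \<Longrightarrow> flex_edge d q r x y"
    and frame: "axis_frame d q z F s" "z \<in> X" "\<And>i. i < d \<Longrightarrow> F i \<in> X"
  shows "skew d (\<lambda>k l. (r (F l, k) - r (z, k)) / s l)"
proof -
  have z0: "q z k = 0" and s_nz: "s i \<noteq> 0" and F: "q (F i) k = (if k = i then s i else 0)"
    if "i < d" "k < d" for i k
    using frame(1) that unfolding axis_frame_def by auto
  have F_z: "F i \<noteq> z" if "i < d" for i using z0 F s_nz that by force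
  have F_F: "F i \<noteq> F j" if "i < d" "j < d" "i \<noteq> j" for i j
    using F[OF that(1) that(1)] F[OF that(2) that(1)] s_nz[OF that(1) that(1)] that by auto
  have diag: "r (F i, i) = r (z, i)" if i: "i < d" for i
  proof -
    have "0 = (\<Sum>k<d. (q z k - q (F i) k) * (r (z, k) - r (F i, k)))"
      using flex[OF frame(2,3) F_z[symmetric], OF i i] unfolding flex_edge_def by simp
    also have "\<dots> = (\<Sum>k<d. (if k = i then - s i else 0) * (r (z, k) - r (F i, k)))"
      using i by (intro sum.cong refl) (auto simp: z0 F)
    finally show ?thesis using i s_nz[OF i i] by (simp add: sum_lessThan_if_eq)
  qed
  have off_diag: "s k * (r (F k, k) - r (F l, k)) = s l * (r (F k, l) - r (F l, l))"
    if kl: "k < d" "l < d" "k \<noteq> l" for k l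
  proof -
    have "0 = (\<Sum>m<d. (q (F k) m - q (F l) m) * (r (F k, m) - r (F l, m)))"
      using flex[OF frame(3) frame(3) F_F, OF kl(1,2) kl] unfolding flex_edge_def by simp
    also have "\<dots> = (\<Sum>m<d. (if m = k then s k else 0) * (r (F k, m) - r (F l, m)))
            - (\<Sum>m<d. (if m = l then s l else 0) * (r (F k, m) - r (F l, m)))"
      unfolding sum_subtractf[symmetric] using kl by (intro sum.cong refl) (auto simp: F left_diff_distrib)
    finally show ?thesis using kl by (simp add: sum_lessThan_if_eq)
  qed
  show ?thesis unfolding skew_def
  proof (intro allI impI)
    fix k l assume kl: "k < d" "l < d"
    show "(r (F l, k) - r (z, k)) / s l = - ((r (F k, l) - r (z, l)) / s k)"
    proof (cases "k = l")
      case True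
      then show ?thesis using diag kl by simp
    next
      case False
      then have "s k * (r (z, k) - r (F l, k)) = s l * (r (F k, l) - r (z, l))"
        using off_diag[OF kl False] diag kl by simp
      then show ?thesis using s_nz[OF kl(1) kl(1)] s_nz[OF kl(2) kl(2)] by (simp add: field_simps)
    qed
  qed
qed

lemma flex_vanishing_on_axis_frame:
  assumes flex: "\<And>x y. x \<in> X \<Longrightarrow> y \<in> X \<Longrightarrow> x \<noteq> y \<Longrightarrow> flex_edge d q u x y"
    and frame: "axis_frame d q z F s" "z \<in> X" "\<And>i. i < d \<Longrightarrow> F i \<in> X"
    and u_z: "\<And>k. k < d \<Longrightarrow> u (z, k) = 0"
    and u_F: "\<And>i k. i < d \<Longrightarrow> k < d \<Longrightarrow> u (F i, k) = 0"
    and c: "c \<in> X" and k: "k < d"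
  shows "u (c, k) = 0"
proof (cases "c = z \<or> c = F k")
  case True
  then show ?thesis using u_z u_F k by blast
next
  case False
  have z0: "\<And>m. m < d \<Longrightarrow> q z m = 0" and s_nz: "s k \<noteq> 0"
    and F: "\<And>m. m < d \<Longrightarrow> q (F k) m = (if m = k then s k else 0)"
    using frame(1) k unfolding axis_frame_def by auto
  have "(\<Sum>m<d. q c m * u (c, m)) = 0"
    using flex[OF c frame(2)] False u_z z0 unfolding flex_edge_def by simp
  moreover have "(\<Sum>m<d. (q c m - q (F k) m) * u (c, m)) = 0"
    using flex[OF c frame(3)[OF k]] False u_F[OF k] unfolding flex_edge_def by simp
  ultimately have "(\<Sum>m<d. (if m = k then s k else 0) * u (c, m)) = 0"
    using F by (simp add: left_diff_distrib sum_subtractf)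
  then show ?thesis using k s_nz by (simp add: sum_lessThan_if_eq)
qed

lemma clique_flex_affine:
  assumes flex: "\<And>x y. x \<in> X \<Longrightarrow> y \<in> X \<Longrightarrow> x \<noteq> y \<Longrightarrow> flex_edge d q r x y"
    and frame: "axis_frame d q z F s" "z \<in> X" "\<And>i. i < d \<Longrightarrow> F i \<in> X"
  shows "\<exists>S t. skew d S \<and> (\<forall>c\<in>X. \<forall>k<d. r (c, k) = affine_motion d S t q (c, k))"
proof (intro exI conjI ballI allI impI)
  define S where "S k l = (r (F l, k) - r (z, k)) / s l" for k l
  show skew: "skew d S" unfolding S_def by (rule axis_frame_flex_skew[OF flex frame])
  define u where "u i = r i - affine_motion d S (\<lambda>k. r (z, k)) q i" for i
  have u_flex: "flex_edge d q u x y" if "x \<in> X" "y \<in> X" "x \<noteq> y" for x y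
    unfolding u_def by (rule flex_edge_diff[OF flex[OF that] flex_edge_affine_motion[OF skew]])
  have u_z: "u (z, k) = 0" if "k < d" for k
    using frame(1) unfolding u_def affine_motion_def axis_frame_def by simp
  have u_F: "u (F i, k) = 0" if "i < d" "k < d" for i k
  proof -
    have "(\<Sum>l<d. S k l * q (F i) l) = (\<Sum>l<d. (if l = i then s i else 0) * S k l)"
      using frame(1) that unfolding axis_frame_def by (intro sum.cong refl) (simp add: mult.commute)
    also have "\<dots> = s i * S k i" by (rule sum_lessThan_if_eq[OF that(1)])
    also have "\<dots> = r (F i, k) - r (z, k)" using frame(1) that unfolding axis_frame_def S_def by simp
    finally show ?thesis unfolding u_def affine_motion_def by simp
  qed
  have "u (c, k) = 0" if "c \<in> X" "k < d" for c k
    using flex_vanishing_on_axis_frame[OF u_flex frame u_z u_F that] .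
  then show "r (c, k) = affine_motion d S (\<lambda>k. r (z, k)) q (c, k)" if "c \<in> X" "k < d" for c k
    using that unfolding u_def by simp
qed

lemma affine_flex_orthogonal_trivial_eq_0:
  assumes V: "finite V" and S: "skew d S"
    and affine: "\<And>c k. c \<in> V \<Longrightarrow> k < d \<Longrightarrow> r (c, k) = affine_motion d S t q (c, k)"
    and orth: "\<forall>j\<in>motion_index d. inner_on (V \<times> {0..<d}) r (trivial_motion d V q j) = 0"
    and i: "i \<in> V \<times> {0..<d}"
  shows "r i = 0"
proof -
  have sym: "(\<Sum>v\<in>V. r (v, k) * q v l) = (\<Sum>v\<in>V. r (v, l) * q v k)" if "k < d" "l < d" for k l
    using orth inner_on_rotation[OF that, of V r q] that unfolding motion_index_def by simp
  have transl: "(\<Sum>v\<in>V. r (v, k)) = 0" if "k < d" for k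
    using orth inner_on_translation[OF that, of V r q] that unfolding motion_index_def by simp
  have "inner_on (V \<times> {0..<d}) r r = (\<Sum>v\<in>V. \<Sum>k<d. r (v, k) * ((\<Sum>l<d. S k l * q v l) + t k))"
    unfolding inner_on_box using affine by (intro sum.cong refl) (simp add: affine_motion_def)
  also have "\<dots> = (\<Sum>v\<in>V. \<Sum>k<d. \<Sum>l<d. S k l * (r (v, k) * q v l)) + (\<Sum>v\<in>V. \<Sum>k<d. t k * r (v, k))"
    unfolding sum.distrib[symmetric]
    by (intro sum.cong refl) (simp add: distrib_left sum_distrib_left mult_ac)
  also have "(\<Sum>v\<in>V. \<Sum>k<d. \<Sum>l<d. S k l * (r (v, k) * q v l)) =
      (\<Sum>k<d. \<Sum>l<d. S k l * (\<Sum>v\<in>V. r (v, k) * q v l))"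
    unfolding sum_distrib_left by (subst sum.swap) (rule sum.cong[OF refl], rule sum.swap)
  also have "(\<Sum>v\<in>V. \<Sum>k<d. t k * r (v, k)) = (\<Sum>k<d. t k * (\<Sum>v\<in>V. r (v, k)))"
    unfolding sum_distrib_left by (rule sum.swap)
  also have "\<dots> = 0" using transl by simp
  also have "(\<Sum>k<d. \<Sum>l<d. S k l * (\<Sum>v\<in>V. r (v, k) * q v l)) = 0"
    using skew_sum_symmetric[OF S sym] .
  finally have "inner_on (V \<times> {0..<d}) r r = 0" by simp
  then show ?thesis using inner_on_self_eq_0[OF _ _ i] V by simp
qed

section \<open>Infinitesimally rigid configurations of two matched cliques\<close>

lemma infinitesimally_rigid_on_line:
  assumes V: "finite (A \<union> B)" and cliques: "is_clique G A" "is_clique G B"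
    and ab: "a \<in> A" "b \<in> B" "a \<noteq> b" "{a, b} \<in> G"
  shows "infinitesimally_rigid 1 (A \<union> B) G (\<lambda>v k. real v)"
  unfolding infinitesimally_rigid_def
proof (intro allI impI)
  fix r :: "nat \<times> nat \<Rightarrow> real"
  assume flex: "\<forall>(x, y)\<in>edges_within (A \<union> B) G. flex_edge 1 (\<lambda>v k. real v) r x y"
    and orth: "\<forall>j\<in>motion_index 1. inner_on ((A \<union> B) \<times> {0..<1}) r (trivial_motion 1 (A \<union> B) (\<lambda>v k. real v) j) = 0"
  have edge: "r (x, 0) = r (y, 0)" if "x \<in> A \<union> B" "y \<in> A \<union> B" "{x, y} \<in> G" for x y
  proof (cases "x = y")
    case False
    then have "(x, y) \<in> edges_within (A \<union> B) G" using that by (simp add: edges_within_iff)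
    then have "(real x - real y) * (r (x, 0) - r (y, 0)) = 0"
      using flex unfolding flex_edge_def by auto
    then show ?thesis using False by simp
  qed simp
  have const: "r (v, 0) = r (a, 0)" if "v \<in> A \<union> B" for v
  proof (cases "v \<in> A")
    case True
    then show ?thesis using edge[of v a] cliques(1) ab unfolding is_clique_def by (cases "v = a") auto
  next
    case False
    then have "r (v, 0) = r (b, 0)"
      using that edge[of v b] cliques(2) ab unfolding is_clique_def by (cases "v = b") auto
    also have "\<dots> = r (a, 0)" using edge[of b a] ab by (simp add: insert_commute)
    finally show ?thesis .
  qed
  have "(0, 1) \<in> motion_index 1" unfolding motion_index_def by simp
  then have "(\<Sum>v\<in>A \<union> B. r (v, 0)) = 0"
    using orth inner_on_translation[of 0 1 "A \<union> B" r "\<lambda>v k. real v"] by simp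
  then have "real (card (A \<union> B)) * r (a, 0) = 0" using const by simp
  moreover have "card (A \<union> B) > 0" using V ab by (auto simp: card_gt_0_iff)
  ultimately show "\<forall>i\<in>(A \<union> B) \<times> {0..<1}. r i = 0" using const by auto
qed

definition upper_pairs :: "nat \<Rightarrow> (nat \<times> nat) set" where
  "upper_pairs d = {(i, j). i \<le> j \<and> j < d}"

lemma finite_upper_pairs [simp]: "finite (upper_pairs d)"
  unfolding upper_pairs_def by (rule finite_subset[of _ "{0..<d} \<times> {0..<d}"]) auto

lemma card_upper_pairs: "card (upper_pairs d) = (d + 1) choose 2"
proof (induction d)
  case 0
  then show ?case by (simp add: upper_pairs_def)
next
  case (Suc d)
  have "upper_pairs (Suc d) = upper_pairs d \<union> (\<lambda>i. (i, d)) ` {0..d}"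
    unfolding upper_pairs_def by auto
  moreover have "upper_pairs d \<inter> (\<lambda>i. (i, d)) ` {0..d} = {}" unfolding upper_pairs_def by auto
  ultimately have "card (upper_pairs (Suc d)) = card (upper_pairs d) + card ((\<lambda>i. (i, d)) ` {0..d})"
    by (simp add: card_Un_disjoint)
  also have "card ((\<lambda>i. (i, d)) ` {0..d}) = Suc d" by (subst card_image) (auto intro: inj_onI)
  moreover have "Suc (Suc d) choose 2 = Suc d + (Suc d choose 2)"
    using binomial_Suc_Suc[of "Suc d" 1] by (simp add: numeral_2_eq_2)
  ultimately show ?case using Suc.IH by simp
qed

lemma matching_enumeration:
  assumes "finite P" "finite M" "card P = card M"
    and M: "\<forall>e\<in>M. \<exists>x\<in>A. \<exists>y\<in>B. e = {x, y}" "\<forall>e\<in>M. \<forall>e'\<in>M. e \<noteq> e' \<longrightarrow> e \<inter> e' = {}"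
  shows "\<exists>a b. inj_on a P \<and> inj_on b P \<and> a ` P \<subseteq> A \<and> b ` P \<subseteq> B \<and> (\<forall>x\<in>P. {a x, b x} \<in> M)"
proof -
  obtain \<beta> where \<beta>: "bij_betw \<beta> P M" using finite_same_card_bij assms(1-3) by blast
  have "\<forall>e\<in>M. \<exists>xy. fst xy \<in> A \<and> snd xy \<in> B \<and> e = {fst xy, snd xy}" using M(1) by fastforce
  then obtain f where f: "\<forall>e\<in>M. fst (f e) \<in> A \<and> snd (f e) \<in> B \<and> e = {fst (f e), snd (f e)}"
    by metis
  define a where "a x = fst (f (\<beta> x))" for x
  define b where "b x = snd (f (\<beta> x))" for x
  have edge: "\<beta> x = {a x, b x}" "a x \<in> A" "b x \<in> B" if "x \<in> P" for x
    using f bij_betw_apply[OF \<beta> that] unfolding a_def b_def by auto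
  have "x = x'" if "x \<in> P" "x' \<in> P" "a x = a x' \<or> b x = b x'" for x x'
  proof -
    have "\<beta> x \<inter> \<beta> x' \<noteq> {}" using that edge by auto
    then have "\<beta> x = \<beta> x'" using that M(2) bij_betw_apply[OF \<beta>] by blast
    then show ?thesis using that bij_betw_imp_inj_on[OF \<beta>] by (simp add: inj_on_eq_iff)
  qed
  then have "inj_on a P" "inj_on b P" unfolding inj_on_def by blast+
  then show ?thesis using edge bij_betw_apply[OF \<beta>] by (intro exI[of _ a] exI[of _ b]) auto
qed

text \<open>The configuration used for \<open>d \<ge> 2\<close>: the matching edge indexed by \<open>(i, j) \<in> upper_pairs d\<close>
  joins a point at \<open>e\<^sub>i\<close> (at the origin for \<open>(0, 0)\<close>) to a point at \<open>e\<^sub>j\<close> if \<open>i < j\<close>, at the origin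
  if \<open>0 < i = j\<close> and at \<open>-e\<^sub>0\<close> if \<open>i = j = 0\<close>; all other vertices sit at the origin. The ends of
  the edges \<open>(0, 0)\<close>, \<open>(0, 1)\<close>, \<open>(i, i)\<close> in \<open>A\<close> and \<open>(1, 1)\<close>, \<open>(0, 0)\<close>, \<open>(0, i)\<close> in \<open>B\<close> form axis frames.
  For the difference of the affine motions of \<open>A\<close> and \<open>B\<close>, the edge \<open>(i, i)\<close> kills the \<open>i\<close>-th
  translation component and the edge \<open>(i, j)\<close> with \<open>i < j\<close> the rotation entry \<open>(j, i)\<close>.\<close>

definition pos_A :: "nat \<times> nat \<Rightarrow> nat \<Rightarrow> real" where
  "pos_A = (\<lambda>(i, j) k. if (i, j) = (0, 0) then 0 else if k = i then 1 else 0)"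

definition pos_B :: "nat \<times> nat \<Rightarrow> nat \<Rightarrow> real" where
  "pos_B = (\<lambda>(i, j) k. if i = j then (if i = 0 \<and> k = 0 then -1 else 0) else if k = j then 1 else 0)"

definition matching_config :: "nat \<Rightarrow> (nat \<times> nat \<Rightarrow> nat) \<Rightarrow> (nat \<times> nat \<Rightarrow> nat) \<Rightarrow> nat \<Rightarrow> nat \<Rightarrow> real" where
  "matching_config d a b v =
     (if v \<in> a ` upper_pairs d then pos_A (inv_into (upper_pairs d) a v)
      else if v \<in> b ` upper_pairs d then pos_B (inv_into (upper_pairs d) b v)
      else (\<lambda>_. 0))"

lemma matching_config_A:
  "inj_on a (upper_pairs d) \<Longrightarrow> ij \<in> upper_pairs d \<Longrightarrow> matching_config d a b (a ij) = pos_A ij"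
  unfolding matching_config_def by simp

lemma matching_config_B:
  assumes "inj_on b (upper_pairs d)" "a ` upper_pairs d \<inter> b ` upper_pairs d = {}" "ij \<in> upper_pairs d"
  shows "matching_config d a b (b ij) = pos_B ij"
  using assms unfolding matching_config_def by auto

lemma axis_frame_A:
  assumes "2 \<le> d" "inj_on a (upper_pairs d)"
  shows "axis_frame d (matching_config d a b) (a (0, 0)) (\<lambda>i. a (if i = 0 then (0, 1) else (i, i))) (\<lambda>_. 1)"
  using assms by (auto simp: axis_frame_def matching_config_A upper_pairs_def pos_A_def)

lemma axis_frame_B:
  assumes "2 \<le> d" "inj_on b (upper_pairs d)" "a ` upper_pairs d \<inter> b ` upper_pairs d = {}"
  shows "axis_frame d (matching_config d a b) (b (1, 1)) (\<lambda>i. b (if i = 0 then (0, 0) else (0, i)))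
    (\<lambda>i. if i = 0 then -1 else 1)"
  using assms by (auto simp: axis_frame_def matching_config_B upper_pairs_def pos_B_def)

lemma upper_pair_positions_rigid:
  assumes D: "skew d D"
    and edge: "\<And>ij. ij \<in> upper_pairs d \<Longrightarrow>
      (\<Sum>k<d. (pos_A ij k - pos_B ij k) * ((\<Sum>l<d. D k l * pos_A ij l) + \<tau> k)) = 0"
  shows "\<forall>k<d. \<tau> k = 0" and "\<forall>k<d. \<forall>l<d. D k l = 0"
proof -
  have D_diag: "D k k = 0" if "k < d" for k
  proof -
    have "D k k = - D k k" using D that unfolding skew_def by blast
    then show ?thesis by simp
  qed
  have unit: "(\<Sum>l<d. g l * (if l = i then 1 else 0)) = g i" if "i < d" for i and g :: "nat \<Rightarrow> real"
    using sum_lessThan_if_eq[OF that, of 1 g] by (simp add: mult.commute)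
  have \<tau>: "\<tau> i = 0" if i: "i < d" for i
  proof (cases "i = 0")
    case True
    have "(0, 0) \<in> upper_pairs d" using i unfolding upper_pairs_def by simp
    from edge[OF this] have "(\<Sum>k<d. (if k = 0 then - 1 else 0) * \<tau> k) = 0"
      by (simp add: pos_A_def pos_B_def sum_negf)
    then show ?thesis using True i by (simp add: sum_lessThan_if_eq)
  next
    case False
    have "(i, i) \<in> upper_pairs d" using i unfolding upper_pairs_def by simp
    from edge[OF this] have "(\<Sum>k<d. (if k = i then 1 else 0) * (D k i + \<tau> k)) = 0"
      using False i by (simp add: pos_A_def pos_B_def unit)
    then show ?thesis using i D_diag by (simp add: sum_lessThan_if_eq)
  qed
  have lower: "D j i = 0" if ij: "i < j" "j < d" for i j
  proof -
    have "(i, j) \<in> upper_pairs d" using ij unfolding upper_pairs_def by simp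
    from edge[OF this]
    have "(\<Sum>k<d. (if k = i then 1 else 0) * (D k i + \<tau> k)) - (\<Sum>k<d. (if k = j then 1 else 0) * (D k i + \<tau> k)) = 0"
      using ij by (simp add: pos_A_def pos_B_def unit left_diff_distrib sum_subtractf)
    then show ?thesis using ij D_diag \<tau> by (simp add: sum_lessThan_if_eq)
  qed
  show "\<forall>k<d. \<tau> k = 0" using \<tau> by blast
  show "\<forall>k<d. \<forall>l<d. D k l = 0"
  proof (intro allI impI)
    fix k l assume kl: "k < d" "l < d"
    have "D k l = - D l k" using D kl unfolding skew_def by blast
    moreover consider "k = l" | "l < k" | "k < l" by linarith
    ultimately show "D k l = 0"
      using kl D_diag lower[of l k] lower[of k l] by cases auto
  qed
qed

lemma matched_affine_flexes_agree:
  assumes SA: "skew d SA" and SB: "skew d SB"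
    and q_a: "\<And>ij. ij \<in> upper_pairs d \<Longrightarrow> q (a ij) = pos_A ij"
    and q_b: "\<And>ij. ij \<in> upper_pairs d \<Longrightarrow> q (b ij) = pos_B ij"
    and flex: "\<And>ij. ij \<in> upper_pairs d \<Longrightarrow> flex_edge d q r (a ij) (b ij)"
    and r_a: "\<And>ij k. ij \<in> upper_pairs d \<Longrightarrow> k < d \<Longrightarrow> r (a ij, k) = affine_motion d SA tA q (a ij, k)"
    and r_b: "\<And>ij k. ij \<in> upper_pairs d \<Longrightarrow> k < d \<Longrightarrow> r (b ij, k) = affine_motion d SB tB q (b ij, k)"
  shows "\<forall>k<d. \<forall>l<d. SA k l = SB k l" and "\<forall>k<d. tA k = tB k"
proof -
  define u where "u i = r i - affine_motion d SB tB q i" for i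
  have "(\<Sum>k<d. (pos_A ij k - pos_B ij k) *
      ((\<Sum>l<d. (SA k l - SB k l) * pos_A ij l) + (tA k - tB k))) = 0"
    if ij: "ij \<in> upper_pairs d" for ij
  proof -
    have "flex_edge d q u (a ij) (b ij)"
      unfolding u_def by (rule flex_edge_diff[OF flex[OF ij] flex_edge_affine_motion[OF SB]])
    moreover have "u (a ij, k) = (\<Sum>l<d. (SA k l - SB k l) * pos_A ij l) + (tA k - tB k)"
      and "u (b ij, k) = 0" if "k < d" for k
      using r_a[OF ij that] r_b[OF ij that] q_a[OF ij]
      by (simp_all add: u_def affine_motion_def left_diff_distrib sum_subtractf)
    ultimately show ?thesis using q_a[OF ij] q_b[OF ij] unfolding flex_edge_def by simp
  qed
  note rigid = upper_pair_positions_rigid[OF skew_diff[OF SA SB] this]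
  from rigid(2) show "\<forall>k<d. \<forall>l<d. SA k l = SB k l" by simp
  from rigid(1) show "\<forall>k<d. tA k = tB k" by simp
qed

lemma matching_config_flex_affine_A:
  assumes d: "2 \<le> d" and a: "inj_on a (upper_pairs d)" "a ` upper_pairs d \<subseteq> A"
    and flex: "\<And>x y. x \<in> A \<Longrightarrow> y \<in> A \<Longrightarrow> x \<noteq> y \<Longrightarrow> flex_edge d (matching_config d a b) r x y"
  shows "\<exists>S t. skew d S \<and> (\<forall>c\<in>A. \<forall>k<d. r (c, k) = affine_motion d S t (matching_config d a b) (c, k))"
proof (rule clique_flex_affine[OF flex axis_frame_A[OF d a(1)]])
  show "a (0, 0) \<in> A" using a(2) d by (auto simp: upper_pairs_def)
  show "a (if i = 0 then (0, 1) else (i, i)) \<in> A" if "i < d" for i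
    using a(2) that d by (auto simp: upper_pairs_def)
qed

lemma matching_config_flex_affine_B:
  assumes d: "2 \<le> d" and b: "inj_on b (upper_pairs d)" "b ` upper_pairs d \<subseteq> B"
    and disjoint: "a ` upper_pairs d \<inter> b ` upper_pairs d = {}"
    and flex: "\<And>x y. x \<in> B \<Longrightarrow> y \<in> B \<Longrightarrow> x \<noteq> y \<Longrightarrow> flex_edge d (matching_config d a b) r x y"
  shows "\<exists>S t. skew d S \<and> (\<forall>c\<in>B. \<forall>k<d. r (c, k) = affine_motion d S t (matching_config d a b) (c, k))"
proof (rule clique_flex_affine[OF flex axis_frame_B[OF d b(1) disjoint]])
  show "b (1, 1) \<in> B" using b(2) d by (auto simp: upper_pairs_def)
  show "b (if i = 0 then (0, 0) else (0, i)) \<in> B" if "i < d" for i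
    using b(2) that by (auto simp: upper_pairs_def)
qed

lemma matched_cliques_infinitesimally_rigid:
  assumes d: "2 \<le> d" and V: "finite (A \<union> B)" and AB: "A \<inter> B = {}"
    and cliques: "is_clique G A" "is_clique G B"
    and a: "inj_on a (upper_pairs d)" "a ` upper_pairs d \<subseteq> A"
    and b: "inj_on b (upper_pairs d)" "b ` upper_pairs d \<subseteq> B"
    and matching: "\<forall>ij\<in>upper_pairs d. {a ij, b ij} \<in> G"
  shows "infinitesimally_rigid d (A \<union> B) G (matching_config d a b)"
  unfolding infinitesimally_rigid_def
proof (intro allI impI)
  let ?q = "matching_config d a b"
  fix r
  assume flex: "\<forall>(x, y)\<in>edges_within (A \<union> B) G. flex_edge d ?q r x y"
    and orth: "\<forall>j\<in>motion_index d. inner_on ((A \<union> B) \<times> {0..<d}) r (trivial_motion d (A \<union> B) ?q j) = 0"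
  have flex_G: "flex_edge d ?q r x y" if "x \<in> A \<union> B" "y \<in> A \<union> B" "x \<noteq> y" "{x, y} \<in> G" for x y
    using flex[rule_format, of "(x, y)"] that by (simp add: edges_within_iff)
  have disjoint: "a ` upper_pairs d \<inter> b ` upper_pairs d = {}" using a(2) b(2) AB by blast
  obtain SA tA where SA: "skew d SA" and r_A: "\<forall>c\<in>A. \<forall>k<d. r (c, k) = affine_motion d SA tA ?q (c, k)"
    using matching_config_flex_affine_A[OF d a] flex_G cliques(1) unfolding is_clique_def by blast
  obtain SB tB where SB: "skew d SB" and r_B: "\<forall>c\<in>B. \<forall>k<d. r (c, k) = affine_motion d SB tB ?q (c, k)"
    using matching_config_flex_affine_B[OF d b disjoint] flex_G cliques(2) unfolding is_clique_def by blast
  have flex_ab: "flex_edge d ?q r (a ij) (b ij)" if "ij \<in> upper_pairs d" for ij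
  proof (rule flex_G)
    show "a ij \<in> A \<union> B" "b ij \<in> A \<union> B" "a ij \<noteq> b ij" using a(2) b(2) AB that by auto
  qed (use matching that in blast)
  have r_a: "r (a ij, k) = affine_motion d SA tA ?q (a ij, k)" if "ij \<in> upper_pairs d" "k < d" for ij k
    using r_A a(2) that by blast
  have r_b: "r (b ij, k) = affine_motion d SB tB ?q (b ij, k)" if "ij \<in> upper_pairs d" "k < d" for ij k
    using r_B b(2) that by blast
  note agree = matched_affine_flexes_agree[OF SA SB matching_config_A[OF a(1)]
      matching_config_B[OF b(1) disjoint] flex_ab r_a r_b]
  have "affine_motion d SB tB ?q (c, k) = affine_motion d SA tA ?q (c, k)" if "k < d" for c k
    unfolding affine_motion_def using agree that by (auto intro!: sum.cong)
  then have affine: "r (c, k) = affine_motion d SA tA ?q (c, k)" if "c \<in> A \<union> B" "k < d" for c k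
    using that r_A r_B by auto
  show "\<forall>i\<in>(A \<union> B) \<times> {0..<d}. r i = 0"
    using affine_flex_orthogonal_trivial_eq_0[OF V SA affine orth] by blast
qed

lemma matched_cliques_rigid_config:
  assumes "d \<ge> 1" and V: "finite (A \<union> B)" and AB: "A \<inter> B = {}"
    and cliques: "is_clique G A" "is_clique G B"
    and M: "M \<subseteq> G" "card M = (d + 1) choose 2" "\<forall>e\<in>M. \<exists>a\<in>A. \<exists>b\<in>B. e = {a, b}"
      "\<forall>e\<in>M. \<forall>e'\<in>M. e \<noteq> e' \<longrightarrow> e \<inter> e' = {}"
  shows "\<exists>q. infinitesimally_rigid d (A \<union> B) G q"
proof (cases "d = 1")
  case True
  then have "card M = 1" using M(2) by (simp add: numeral_2_eq_2)
  then obtain e where "e \<in> M" by (auto simp: card_Suc_eq)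
  moreover obtain a b where ab: "a \<in> A" "b \<in> B" "e = {a, b}" using M(3) \<open>e \<in> M\<close> by blast
  ultimately have "{a, b} \<in> G" "a \<noteq> b" using M(1) AB by auto
  then show ?thesis using infinitesimally_rigid_on_line[OF V cliques ab(1,2)] True by blast
next
  case False
  then have d: "2 \<le> d" using assms(1) by simp
  then have "card M > 0" using M(2) by simp
  then have "finite M" by (rule card_ge_0_finite)
  moreover have "card (upper_pairs d) = card M" using M(2) by (simp add: card_upper_pairs)
  ultimately obtain a b where a: "inj_on a (upper_pairs d)" "a ` upper_pairs d \<subseteq> A"
    and b: "inj_on b (upper_pairs d)" "b ` upper_pairs d \<subseteq> B"
    and ab: "\<forall>ij\<in>upper_pairs d. {a ij, b ij} \<in> M"
    using matching_enumeration[OF finite_upper_pairs _ _ M(3,4)] by blast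
  have "\<forall>ij\<in>upper_pairs d. {a ij, b ij} \<in> G" using ab M(1) by blast
  then show ?thesis using matched_cliques_infinitesimally_rigid[OF d V AB cliques a b] by blast
qed

theorem claim2p4:
  fixes d n :: nat and G :: "nat set set" and A B :: "nat set"
  assumes "d \<ge> 1"
    and "is_graph n G"
    and "rigidity_closed d n G"
    and "A \<subseteq> {0..<n}" and "B \<subseteq> {0..<n}" and "A \<inter> B = {}"
    and "is_clique G A" and "is_clique G B"
    and "\<exists>M \<subseteq> G. card M = (d + 1) choose 2
             \<and> (\<forall>e\<in>M. \<exists>a\<in>A. \<exists>b\<in>B. e = {a, b})
             \<and> (\<forall>e\<in>M. \<forall>e'\<in>M. e \<noteq> e' \<longrightarrow> e \<inter> e' = {})"
  shows "is_clique G (A \<union> B)"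
proof -
  obtain p where gen: "generic d n p" and closed: "rigidity_closure d n p G = G"
    using assms(3) unfolding rigidity_closed_def by blast
  from assms(9) obtain M where M: "M \<subseteq> G" "card M = (d + 1) choose 2"
      "\<forall>e\<in>M. \<exists>a\<in>A. \<exists>b\<in>B. e = {a, b}" "\<forall>e\<in>M. \<forall>e'\<in>M. e \<noteq> e' \<longrightarrow> e \<inter> e' = {}"
    by (elim exE conjE)
  have V: "finite (A \<union> B)" "A \<union> B \<subseteq> {0..<n}"
    using assms(4,5) finite_subset[of "A \<union> B" "{0..<n}"] by auto
  obtain q where rigid: "infinitesimally_rigid d (A \<union> B) G q"
    using matched_cliques_rigid_config[OF assms(1) V(1) assms(6-8) M] by blast
  have "{x, y} \<in> G" if "x \<in> A \<union> B" "y \<in> A \<union> B" "x \<noteq> y" for x y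
    using generic_rigid_in_closure[OF gen V rigid that] closed by simp
  then show ?thesis unfolding is_clique_def by blast
qed

end
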